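(* Every triality of a thick building of type $\mathsf{D}_4$ is capped.
   Context: The Coxeter graph $\mathsf{D}_4$ has central node $2$ joined to nodes $1,3,4$. A triality is an automorphism of the building inducing an order $3$ automorphism of the Coxeter graph (cyclically permuting $1,3,4$). Simplices are opposite if every chamber containing either is opposite some chamber containing the other. $\mathrm{Opp}(\theta)$ is the set of simplices opposite their image; $\mathrm{Type}(\theta)$ is the union of the type sets of simplices in $\mathrm{Opp}(\theta)$; $\theta$ is capped if $\mathrm{Opp}(\theta)$ contains a simplex of type $\mathrm{Type}(\theta)$. *)

theory Defs
  imports Main
begin

text \<open>Elements of W act on the integers; they permute the set {-4..-1,1..4}
  commuting with negation and fix every other integer.  Nodes are labelled
  1,2,3,4 with central node 2 joined to 1, 3 and 4 (Bourbaki labelling).\<close>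

definition swp :: "int \<Rightarrow> int \<Rightarrow> int \<Rightarrow> int" where
  "swp a b x = (if \<bar>x\<bar> = a then sgn x * b else if \<bar>x\<bar> = b then sgn x * a else x)"

definition nswp :: "int \<Rightarrow> int \<Rightarrow> int \<Rightarrow> int" where
  "nswp a b x = (if \<bar>x\<bar> = a then - (sgn x * b) else if \<bar>x\<bar> = b then - (sgn x * a) else x)"

definition D4_S :: "nat set" where
  "D4_S = {1, 2, 3, 4}"

definition gen :: "nat \<Rightarrow> int \<Rightarrow> int" where
  "gen i = (if i = 1 then swp 1 2 else if i = 2 then swp 2 3
            else if i = 3 then swp 3 4 else if i = 4 then nswp 3 4 else id)"

definition wprod :: "nat list \<Rightarrow> int \<Rightarrow> int" where
  "wprod ws = foldr (\<lambda>i f. gen i \<circ> f) ws id"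

definition coxW :: "(int \<Rightarrow> int) set" where
  "coxW = {wprod ws | ws. set ws \<subseteq> D4_S}"

definition len :: "(int \<Rightarrow> int) \<Rightarrow> nat" where
  "len w = (LEAST n. \<exists>ws. set ws \<subseteq> D4_S \<and> length ws = n \<and> wprod ws = w)"

section \<open>Buildings of type D4 as W-metric spaces (Abramenko--Brown, Def. 5.1)\<close>

text \<open>The chambers are all elements of the type 'c; delta is the Weyl distance.\<close>
definition D4_building :: "('c \<Rightarrow> 'c \<Rightarrow> int \<Rightarrow> int) \<Rightarrow> bool" where
  "D4_building \<delta> \<longleftrightarrow>
     (\<forall>C D. \<delta> C D \<in> coxW) \<and>
     (\<forall>C D. \<delta> C D = id \<longleftrightarrow> C = D) \<and>
     (\<forall>C D C' s. s \<in> D4_S \<and> \<delta> C' C = gen s \<longrightarrow>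
         \<delta> C' D \<in> {gen s \<circ> \<delta> C D, \<delta> C D} \<and>
         (len (gen s \<circ> \<delta> C D) = len (\<delta> C D) + 1 \<longrightarrow> \<delta> C' D = gen s \<circ> \<delta> C D)) \<and>
     (\<forall>C D s. s \<in> D4_S \<longrightarrow> (\<exists>C'. \<delta> C' C = gen s \<and> \<delta> C' D = gen s \<circ> \<delta> C D))"

text \<open>Thick: every panel contains at least three chambers.\<close>
definition thick :: "('c \<Rightarrow> 'c \<Rightarrow> int \<Rightarrow> int) \<Rightarrow> bool" where
  "thick \<delta> \<longleftrightarrow> (\<forall>C s. s \<in> D4_S \<longrightarrow>
      (\<exists>D1 D2. D1 \<noteq> D2 \<and> \<delta> C D1 = gen s \<and> \<delta> C D2 = gen s))"

definition chamber_opp :: "('c \<Rightarrow> 'c \<Rightarrow> int \<Rightarrow> int) \<Rightarrow> 'c \<Rightarrow> 'c \<Rightarrow> bool" where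
  "chamber_opp \<delta> C D \<longleftrightarrow> len (\<delta> C D) = Max (len ` coxW)"

definition residue :: "('c \<Rightarrow> 'c \<Rightarrow> int \<Rightarrow> int) \<Rightarrow> nat set \<Rightarrow> 'c \<Rightarrow> 'c set" where
  "residue \<delta> K C = {D. \<exists>ws. set ws \<subseteq> K \<and> \<delta> C D = wprod ws}"

text \<open>A simplex of type J (J a subset of the node set) is represented by the pair
  (J, R), where R is the set of chambers containing it, i.e. a residue of type S - J.\<close>
definition simplices :: "('c \<Rightarrow> 'c \<Rightarrow> int \<Rightarrow> int) \<Rightarrow> (nat set \<times> 'c set) set" where
  "simplices \<delta> = {(J, residue \<delta> (D4_S - J) C) | J C. J \<subseteq> D4_S}"

definition simplex_opp :: "('c \<Rightarrow> 'c \<Rightarrow> int \<Rightarrow> int) \<Rightarrow> nat set \<times> 'c set \<Rightarrow> nat set \<times> 'c set \<Rightarrow> bool" where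
  "simplex_opp \<delta> a b \<longleftrightarrow>
     (\<forall>C \<in> snd a. \<exists>D \<in> snd b. chamber_opp \<delta> C D) \<and>
     (\<forall>D \<in> snd b. \<exists>C \<in> snd a. chamber_opp \<delta> C D)"

definition building_aut :: "('c \<Rightarrow> 'c \<Rightarrow> int \<Rightarrow> int) \<Rightarrow> ('c \<Rightarrow> 'c) \<Rightarrow> (nat \<Rightarrow> nat) \<Rightarrow> bool" where
  "building_aut \<delta> \<theta> \<sigma> \<longleftrightarrow> bij \<theta> \<and> bij_betw \<sigma> D4_S D4_S \<and>
     (\<forall>C D ws. set ws \<subseteq> D4_S \<and> \<delta> C D = wprod ws \<longrightarrow>
        \<delta> (\<theta> C) (\<theta> D) = wprod (map \<sigma> ws))"

definition triality :: "('c \<Rightarrow> 'c \<Rightarrow> int \<Rightarrow> int) \<Rightarrow> ('c \<Rightarrow> 'c) \<Rightarrow> (nat \<Rightarrow> nat) \<Rightarrow> bool" where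
  "triality \<delta> \<theta> \<sigma> \<longleftrightarrow> building_aut \<delta> \<theta> \<sigma> \<and> \<sigma> 2 = 2 \<and>
     ((\<sigma> 1 = 3 \<and> \<sigma> 3 = 4 \<and> \<sigma> 4 = 1) \<or> (\<sigma> 1 = 4 \<and> \<sigma> 4 = 3 \<and> \<sigma> 3 = 1))"

definition simplex_image :: "('c \<Rightarrow> 'c) \<Rightarrow> (nat \<Rightarrow> nat) \<Rightarrow> nat set \<times> 'c set \<Rightarrow> nat set \<times> 'c set" where
  "simplex_image \<theta> \<sigma> a = (\<sigma> ` fst a, \<theta> ` snd a)"

definition Opp :: "('c \<Rightarrow> 'c \<Rightarrow> int \<Rightarrow> int) \<Rightarrow> ('c \<Rightarrow> 'c) \<Rightarrow> (nat \<Rightarrow> nat) \<Rightarrow> (nat set \<times> 'c set) set" where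
  "Opp \<delta> \<theta> \<sigma> = {a \<in> simplices \<delta>. simplex_opp \<delta> a (simplex_image \<theta> \<sigma> a)}"

definition Type :: "('c \<Rightarrow> 'c \<Rightarrow> int \<Rightarrow> int) \<Rightarrow> ('c \<Rightarrow> 'c) \<Rightarrow> (nat \<Rightarrow> nat) \<Rightarrow> nat set" where
  "Type \<delta> \<theta> \<sigma> = \<Union> (fst ` Opp \<delta> \<theta> \<sigma>)"

definition capped :: "('c \<Rightarrow> 'c \<Rightarrow> int \<Rightarrow> int) \<Rightarrow> ('c \<Rightarrow> 'c) \<Rightarrow> (nat \<Rightarrow> nat) \<Rightarrow> bool" where
  "capped \<delta> \<theta> \<sigma> \<longleftrightarrow> (\<exists>a \<in> Opp \<delta> \<theta> \<sigma>. fst a = Type \<delta> \<theta> \<sigma>)"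

end

theory Submission
  imports Defs
begin

text \<open>The Weyl group is realised by windows of even signed permutations; its length function is
  certified by a finite computation. If \<open>\<theta>\<close> maps some chamber to an opposite one, that chamber is a
  simplex of full type in \<open>Opp \<theta>\<close>. Otherwise, since \<open>w\<^sub>0\<close> is central, every simplex of \<open>Opp \<theta>\<close>
  has a \<open>\<sigma>\<close>-stable type. A type containing the central node \<open>2\<close> is impossible: some chamber \<open>C\<close>
  of such a simplex would have \<open>\<delta> C (\<theta> C) \<in> W\<^sub>1\<^sub>3\<^sub>4 w\<^sub>0\<close>, and from there moving to suitable
  neighbouring chambers (using thickness) lengthens the displacement until a chamber is mapped to an
  opposite one. So the types in \<open>Opp \<theta>\<close> are \<open>{}\<close>, which occurs for the empty simplex, and possibly
  \<open>{1, 3, 4}\<close>; the larger one that occurs is \<open>Type \<theta>\<close>.\<close>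

section \<open>Signed permutations and windows\<close>

lemma swp_odd: "swp a b (- x) = - swp a b x"
  by (simp add: swp_def sgn_if)

lemma nswp_odd: "nswp a b (- x) = - nswp a b x"
  by (simp add: nswp_def sgn_if)

lemma swp_involutive: "0 < a \<Longrightarrow> 0 < b \<Longrightarrow> a \<noteq> b \<Longrightarrow> swp a b (swp a b x) = x"
  by (auto simp: swp_def sgn_if abs_if)

lemma nswp_involutive: "0 < a \<Longrightarrow> 0 < b \<Longrightarrow> a \<noteq> b \<Longrightarrow> nswp a b (nswp a b x) = x"
  by (auto simp: nswp_def sgn_if abs_if)

lemma gen_involutive [simp]: "gen s (gen s x) = x"
  by (simp add: gen_def swp_involutive nswp_involutive)

lemma gen_cancel: "gen s \<circ> (gen s \<circ> f) = f"
  by (simp add: fun_eq_iff)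

lemma gen_odd: "gen s (- x) = - gen s x"
  by (simp add: gen_def swp_odd nswp_odd)

lemma gen_outside: "\<bar>x\<bar> \<notin> {1..4} \<Longrightarrow> gen s x = x"
  by (auto simp: gen_def swp_def nswp_def)

lemma gen_neq_id: "s \<in> D4_S \<Longrightarrow> gen s \<noteq> id"
proof
  assume "s \<in> D4_S" "gen s = id"
  then have "gen s 1 = 1" "gen s 3 = 3" by auto
  with \<open>s \<in> D4_S\<close> show False by (auto simp: D4_S_def gen_def swp_def nswp_def)
qed

definition signed_perm :: "int list \<Rightarrow> int \<Rightarrow> int" where
  "signed_perm l x = (if \<bar>x\<bar> \<in> {1..4} then sgn x * l ! nat (\<bar>x\<bar> - 1) else x)"

definition window :: "(int \<Rightarrow> int) \<Rightarrow> int list" where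
  "window w = map w [1, 2, 3, 4]"

lemma window_comp: "window (f \<circ> g) = map f (window g)"
  by (simp add: window_def)

lemma length_four_cases: "length l = 4 \<Longrightarrow> \<exists>a b c d. l = [a, b, c, d]"
  by (auto simp: length_Suc_conv numeral_eq_Suc)

lemma window_signed_perm: "length l = 4 \<Longrightarrow> window (signed_perm l) = l"
  by (auto dest!: length_four_cases simp: window_def signed_perm_def)

lemma comp_signed_perm:
  assumes "length l = 4" and odd: "\<And>x. f (- x) = - f x"
    and outside: "\<And>x. \<bar>x\<bar> \<notin> {1..4} \<Longrightarrow> f x = x"
  shows "f \<circ> signed_perm l = signed_perm (map f l)"
proof
  fix x
  show "(f \<circ> signed_perm l) x = signed_perm (map f l) x"
  proof (cases "\<bar>x\<bar> \<in> {1..4}")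
    case True
    then have "nat (\<bar>x\<bar> - 1) < length l" using assms(1) by auto
    moreover have "f (sgn x * y) = sgn x * f y" for y
      using True odd[of y] by (cases "x < 0") auto
    ultimately show ?thesis using True by (simp add: signed_perm_def)
  next
    case False
    then show ?thesis using outside[OF False] by (simp add: signed_perm_def del: atLeastAtMost_iff)
  qed
qed

lemma gen_comp_signed_perm [simp]: "length l = 4 \<Longrightarrow> gen s \<circ> signed_perm l = signed_perm (map (gen s) l)"
  by (rule comp_signed_perm) (auto simp: gen_odd gen_outside)

lemma signed_perm_comp:
  "length m = 4 \<Longrightarrow> signed_perm l \<circ> signed_perm m = signed_perm (map (signed_perm l) m)"
  by (rule comp_signed_perm) (auto simp: signed_perm_def)

lemma signed_perm_identity: "signed_perm [1, 2, 3, 4] = id"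
proof
  fix x :: int
  have "[1, 2, 3, 4] ! nat (\<bar>x\<bar> - 1) = \<bar>x\<bar>" if "\<bar>x\<bar> \<in> {1..4}"
  proof -
    have "\<bar>x\<bar> \<in> {1, 2, 3, 4}" using that by auto
    then show ?thesis by auto
  qed
  then show "signed_perm [1, 2, 3, 4] x = id x"
    by (simp add: signed_perm_def sgn_mult_abs)
qed

lemma wprod_Nil [simp]: "wprod [] = id"
  and wprod_Cons [simp]: "wprod (s # ws) = gen s \<circ> wprod ws"
  by (simp_all add: wprod_def)

lemma wprod_append: "wprod (xs @ ys) = wprod xs \<circ> wprod ys"
  by (induction xs) auto

lemma length_window [simp]: "length (window w) = 4"
  by (simp add: window_def)

lemma signed_perm_window_wprod: "signed_perm (window (wprod ws)) = wprod ws"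
proof (induction ws)
  case Nil
  then show ?case by (simp add: window_def signed_perm_identity)
next
  case (Cons s ws)
  have "signed_perm (window (gen s \<circ> wprod ws)) = gen s \<circ> signed_perm (window (wprod ws))"
    by (simp only: window_comp gen_comp_signed_perm length_window)
  then show ?case using Cons.IH by (simp only: wprod_Cons)
qed

section \<open>The Coxeter length\<close>

definition permutation_windows :: "int list list" where
  "permutation_windows = filter distinct (List.n_lists 4 [1, 2, 3, 4])"

definition even_sign_patterns :: "int list list" where
  "even_sign_patterns = filter (\<lambda>e. even (length (filter (\<lambda>x. x < 0) e))) (List.n_lists 4 [1, -1])"

definition D4_windows :: "int list list" where
  "D4_windows = [map2 (*) e p. p \<leftarrow> permutation_windows, e \<leftarrow> even_sign_patterns]"

definition D4_window :: "int list \<Rightarrow> bool" where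
  "D4_window l \<longleftrightarrow> length l = 4 \<and> distinct (map abs l) \<and> (\<forall>x \<in> set l. \<bar>x\<bar> \<in> {1, 2, 3, 4})
     \<and> even (length (filter (\<lambda>x. x < 0) l))"

lemma D4_window_in_D4_windows:
  assumes "D4_window l"
  shows "l \<in> set D4_windows"
proof -
  have l: "length l = 4" "distinct (map abs l)" "\<And>x. x \<in> set l \<Longrightarrow> \<bar>x\<bar> \<in> {1, 2, 3, 4}"
    "even (length (filter (\<lambda>x. x < 0) l))"
    using assms by (auto simp: D4_window_def)
  have "map abs l \<in> set permutation_windows"
    using l by (auto simp: permutation_windows_def set_n_lists)
  moreover have "map sgn l \<in> set even_sign_patterns"
  proof -
    have "sgn x \<in> {1, -1}" if "x \<in> set l" for x
      using l(3)[OF that] by (auto simp: sgn_if)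
    moreover have "filter (\<lambda>x. x < 0) (map sgn l) = map sgn (filter (\<lambda>x. x < 0) l)"
      by (simp add: filter_map comp_def sgn_less)
    ultimately show ?thesis
      using l(1,4) by (auto simp: even_sign_patterns_def set_n_lists)
  qed
  moreover have "map2 (*) (map sgn l) (map abs l) = l"
    by (simp add: map2_map_map sgn_mult_abs)
  ultimately show ?thesis
    unfolding D4_windows_def by force
qed

lemma length_D4_windows_elem: "l \<in> set D4_windows \<Longrightarrow> length l = 4"
  by (auto simp: D4_windows_def permutation_windows_def even_sign_patterns_def
      dest!: length_n_lists_elem)

text \<open>Inversions plus pairs of positive sum of the window relabelled by \<open>x \<mapsto> x - 5 sgn x\<close>: the usual
  length formula of type \<open>D\<close>, adapted to the labelling of the generators. It is only used through the
  finite check below, which certifies it as the Coxeter length.\<close>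
definition window_length :: "int list \<Rightarrow> nat" where
  "window_length l = (let u = map (\<lambda>x. x - 5 * sgn x) l; pairs = [(p, q). q \<leftarrow> [0..<4], p \<leftarrow> [0..<q]]
     in length (filter (\<lambda>(p, q). u ! q < u ! p) pairs) + length (filter (\<lambda>(p, q). 0 < u ! p + u ! q) pairs))"

lemma D4_windows_length_certificate:
  "\<forall>l \<in> set D4_windows.
     (\<forall>s \<in> {1, 2, 3, 4}. D4_window (map (gen s) l) \<and> window_length (map (gen s) l) \<le> window_length l + 1)
   \<and> (l = [1, 2, 3, 4] \<or> (\<exists>s \<in> {1, 2, 3, 4}. window_length (map (gen s) l) < window_length l))
   \<and> window_length l \<le> 12 \<and> (window_length l = 12 \<longrightarrow> l = [-1, -2, -3, -4])"
  by code_simp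

lemma D4_windows_gen:
  assumes "l \<in> set D4_windows" and "s \<in> D4_S"
  shows "map (gen s) l \<in> set D4_windows" and "window_length (map (gen s) l) \<le> window_length l + 1"
  using D4_windows_length_certificate assms D4_window_in_D4_windows by (auto simp: D4_S_def)

lemma D4_windows_descent:
  "l \<in> set D4_windows \<Longrightarrow> l \<noteq> [1, 2, 3, 4] \<Longrightarrow> \<exists>s \<in> D4_S. window_length (map (gen s) l) < window_length l"
  using D4_windows_length_certificate by (auto simp: D4_S_def)

lemma D4_windows_length_le_12: "l \<in> set D4_windows \<Longrightarrow> window_length l \<le> 12"
  and D4_windows_length_eq_12: "l \<in> set D4_windows \<Longrightarrow> window_length l = 12 \<Longrightarrow> l = [-1, -2, -3, -4]"
  using D4_windows_length_certificate by auto

lemma window_wprod_in_D4_windows: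
  "set ws \<subseteq> D4_S \<Longrightarrow> window (wprod ws) \<in> set D4_windows \<and> window_length (window (wprod ws)) \<le> length ws"
proof (induction ws)
  case Nil
  have "D4_window [1, 2, 3, 4]" and "window_length [1, 2, 3, 4] = 0"
    by code_simp+
  then show ?case by (simp add: window_def D4_window_in_D4_windows)
next
  case (Cons s ws)
  have window_Cons: "window (wprod (s # ws)) = map (gen s) (window (wprod ws))"
    by (simp only: wprod_Cons window_comp)
  show ?case
    unfolding window_Cons using Cons D4_windows_gen[of "window (wprod ws)" s] by auto
qed

lemma word_of_D4_window:
  "l \<in> set D4_windows \<Longrightarrow> \<exists>ws. set ws \<subseteq> D4_S \<and> length ws \<le> window_length l \<and> wprod ws = signed_perm l"
proof (induction "window_length l" arbitrary: l rule: less_induct)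
  case less
  show ?case
  proof (cases "l = [1, 2, 3, 4]")
    case True
    then show ?thesis by (intro exI[of _ "[]"]) (simp add: signed_perm_identity)
  next
    case False
    then obtain s where s: "s \<in> D4_S" and shorter: "window_length (map (gen s) l) < window_length l"
      using D4_windows_descent less.prems by blast
    obtain ws where ws: "set ws \<subseteq> D4_S" "length ws \<le> window_length (map (gen s) l)"
      "wprod ws = signed_perm (map (gen s) l)"
      using less.hyps[OF shorter] D4_windows_gen(1)[OF less.prems s] by blast
    have "wprod (s # ws) = signed_perm l"
      using ws(3) length_D4_windows_elem[OF less.prems] by (simp add: map_idI)
    then show ?thesis using ws s shorter by (intro exI[of _ "s # ws"]) auto
  qed
qed

lemma coxW_eq_signed_perm_image: "coxW = signed_perm ` set D4_windows"
proof
  show "coxW \<subseteq> signed_perm ` set D4_windows"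
  proof
    fix w assume "w \<in> coxW"
    then obtain ws where ws: "set ws \<subseteq> D4_S" "w = wprod ws" by (auto simp: coxW_def)
    then have "window (wprod ws) \<in> set D4_windows"
      using window_wprod_in_D4_windows by blast
    then show "w \<in> signed_perm ` set D4_windows"
      using ws(2) signed_perm_window_wprod by (metis image_eqI)
  qed
  show "signed_perm ` set D4_windows \<subseteq> coxW"
  proof
    fix w assume "w \<in> signed_perm ` set D4_windows"
    then obtain l where "l \<in> set D4_windows" "w = signed_perm l" by blast
    then obtain ws where "set ws \<subseteq> D4_S" "w = wprod ws" using word_of_D4_window by metis
    then show "w \<in> coxW" unfolding coxW_def by blast
  qed
qed

lemma len_le_length: "set ws \<subseteq> D4_S \<Longrightarrow> len (wprod ws) \<le> length ws"
  unfolding len_def by (rule Least_le) auto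

lemma exists_reduced_word:
  "w \<in> coxW \<Longrightarrow> \<exists>ws. set ws \<subseteq> D4_S \<and> length ws = len w \<and> wprod ws = w"
  unfolding len_def coxW_def by (rule LeastI_ex) auto

lemma len_signed_perm:
  assumes l: "l \<in> set D4_windows"
  shows "len (signed_perm l) = window_length l"
proof (rule antisym)
  obtain ws where "set ws \<subseteq> D4_S" "length ws \<le> window_length l" "wprod ws = signed_perm l"
    using word_of_D4_window[OF l] by blast
  then show "len (signed_perm l) \<le> window_length l"
    using len_le_length by fastforce
  obtain vs where vs: "set vs \<subseteq> D4_S" "length vs = len (signed_perm l)" "wprod vs = signed_perm l"
    using exists_reduced_word l coxW_eq_signed_perm_image by blast
  have "window (wprod vs) = l"
    using vs(3) window_signed_perm length_D4_windows_elem[OF l] by simp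
  then show "window_length l \<le> len (signed_perm l)"
    using window_wprod_in_D4_windows[OF vs(1)] vs(2) by simp
qed

definition w0 :: "int \<Rightarrow> int" where
  "w0 = signed_perm [-1, -2, -3, -4]"

lemma w0_window_in_D4_windows: "[-1, -2, -3, -4] \<in> set D4_windows"
proof -
  have "D4_window [-1, -2, -3, -4]" by code_simp
  then show ?thesis by (rule D4_window_in_D4_windows)
qed

lemma w0_in_coxW: "w0 \<in> coxW"
  using w0_window_in_D4_windows by (simp add: w0_def coxW_eq_signed_perm_image)

lemma len_w0: "len w0 = 12"
proof -
  have "window_length [-1, -2, -3, -4] = 12" by code_simp
  then show ?thesis using len_signed_perm[OF w0_window_in_D4_windows] by (simp add: w0_def)
qed

lemma len_le_12: "w \<in> coxW \<Longrightarrow> len w \<le> 12"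
  by (auto simp: coxW_eq_signed_perm_image len_signed_perm D4_windows_length_le_12)

lemma len_eq_12_iff:
  assumes "w \<in> coxW"
  shows "len w = 12 \<longleftrightarrow> w = w0"
proof
  obtain l where l: "l \<in> set D4_windows" "w = signed_perm l"
    using assms by (auto simp: coxW_eq_signed_perm_image)
  assume "len w = 12"
  then have "l = [-1, -2, -3, -4]"
    using l len_signed_perm D4_windows_length_eq_12 by auto
  then show "w = w0" using l(2) by (simp add: w0_def)
qed (simp add: len_w0)

lemma Max_len_coxW: "Max (len ` coxW) = 12"
proof (rule Max_eqI)
  show "finite (len ` coxW)" by (simp add: coxW_eq_signed_perm_image)
qed (use len_le_12 len_w0 w0_in_coxW in auto)

lemma wprod_rev_comp: "wprod (rev ws) \<circ> wprod ws = id"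
proof (induction ws)
  case (Cons s ws)
  then show ?case by (simp add: wprod_append fun_eq_iff)
qed simp

lemma inv_wprod: "inv (wprod ws) = wprod (rev ws)"
  using wprod_rev_comp[of ws] wprod_rev_comp[of "rev ws"] by (intro inv_unique_comp) auto

lemma bij_wprod: "bij (wprod ws)"
  using wprod_rev_comp[of ws] wprod_rev_comp[of "rev ws"] by (intro o_bij) auto

definition parabolic :: "nat set \<Rightarrow> (int \<Rightarrow> int) set" where
  "parabolic T = {wprod us | us. set us \<subseteq> T}"

lemma coxW_eq_parabolic: "coxW = parabolic D4_S"
  by (simp add: coxW_def parabolic_def)

lemma wprod_in_parabolic: "set us \<subseteq> T \<Longrightarrow> wprod us \<in> parabolic T"
  by (auto simp: parabolic_def)

lemma gen_in_parabolic: "s \<in> T \<Longrightarrow> gen s \<in> parabolic T"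
  using wprod_in_parabolic[of "[s]" T] by simp

lemma parabolic_comp:
  assumes "u \<in> parabolic T" and "v \<in> parabolic T"
  shows "u \<circ> v \<in> parabolic T"
proof -
  obtain us vs where "set us \<subseteq> T" "set vs \<subseteq> T" "u = wprod us" "v = wprod vs"
    using assms by (auto simp: parabolic_def)
  then show ?thesis using wprod_in_parabolic[of "us @ vs" T] by (simp add: wprod_append)
qed

lemma parabolic_inv:
  assumes "u \<in> parabolic T"
  shows "inv u \<in> parabolic T"
proof -
  obtain us where "set us \<subseteq> T" "u = wprod us" using assms by (auto simp: parabolic_def)
  then show ?thesis using wprod_in_parabolic[of "rev us" T] by (simp add: inv_wprod)
qed

lemma bij_parabolic: "u \<in> parabolic T \<Longrightarrow> bij u"
  by (auto simp: parabolic_def bij_wprod)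

lemma parabolic_inv_comp_cancel: "u \<in> parabolic T \<Longrightarrow> inv u \<circ> (u \<circ> v) = v"
  by (simp add: bij_is_inj bij_parabolic flip: comp_assoc)

lemma parabolic_mono: "T \<subseteq> T' \<Longrightarrow> parabolic T \<subseteq> parabolic T'"
  by (auto simp: parabolic_def)

lemma parabolic_empty: "parabolic {} = {id}"
  by (simp add: parabolic_def)

lemma parabolic_preserves:
  assumes "\<And>t. t \<in> T \<Longrightarrow> gen t ` A \<subseteq> A" and "u \<in> parabolic T"
  shows "u ` A \<subseteq> A"
proof -
  obtain us where "set us \<subseteq> T" "u = wprod us" using assms(2) by (auto simp: parabolic_def)
  moreover have "set us \<subseteq> T \<Longrightarrow> wprod us ` A \<subseteq> A"
    by (induction us) (use assms(1) in \<open>auto simp: image_comp[symmetric]\<close>)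
  ultimately show ?thesis by simp
qed

lemma gen_notin_parabolic:
  assumes "s \<in> D4_S" and "s \<notin> T"
  shows "gen s \<notin> parabolic T"
proof
  assume gen_s: "gen s \<in> parabolic T"
  obtain A x where "x \<in> A" "gen s x \<notin> A" and stable: "\<And>t. t \<noteq> s \<Longrightarrow> gen t ` A \<subseteq> A"
  proof -
    consider "s = 1" | "s = 2" | "s = 3" | "s = 4" using assms(1) by (auto simp: D4_S_def)
    then show thesis
    proof cases
      case 1
      then show thesis by (intro that[of 1 "{1}"]) (auto simp: gen_def swp_def nswp_def)
    next
      case 2
      then show thesis by (intro that[of 2 "{1, 2}"]) (auto simp: gen_def swp_def nswp_def)
    next
      case 3
      then show thesis by (intro that[of 3 "{1, 2, 3, -4}"]) (auto simp: gen_def swp_def nswp_def)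
    next
      case 4
      then show thesis by (intro that[of 3 "{1, 2, 3, 4}"]) (auto simp: gen_def swp_def nswp_def)
    qed
  qed
  moreover have "gen s ` A \<subseteq> A"
    by (rule parabolic_preserves[OF _ gen_s]) (metis stable assms(2))
  ultimately show False by blast
qed

lemma len_inv:
  assumes "w \<in> coxW"
  shows "len (inv w) = len w"
proof -
  have le: "len (inv v) \<le> len v" if v: "v \<in> coxW" for v
  proof -
    obtain ws where "set ws \<subseteq> D4_S" "length ws = len v" "wprod ws = v"
      using exists_reduced_word[OF v] by blast
    then show ?thesis using len_le_length[of "rev ws"] by (auto simp: inv_wprod)
  qed
  have "inv w \<in> coxW" using assms parabolic_inv by (simp add: coxW_eq_parabolic)
  then have "len w \<le> len (inv w)"
    using le inv_inv_eq[OF bij_parabolic] assms by (metis coxW_eq_parabolic)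
  then show ?thesis using le[OF assms] by simp
qed

definition reduced :: "nat list \<Rightarrow> bool" where
  "reduced ws \<longleftrightarrow> set ws \<subseteq> D4_S \<and> len (wprod ws) = length ws"

lemma reduced_rev: "reduced ws \<Longrightarrow> reduced (rev ws)"
  using len_inv[of "wprod ws"] wprod_in_parabolic[of ws D4_S]
  by (auto simp: reduced_def inv_wprod coxW_eq_parabolic)

lemma reduced_appendD:
  assumes "reduced (a @ b)"
  shows "reduced a"
proof -
  have S: "set a \<subseteq> D4_S" "set b \<subseteq> D4_S" using assms by (auto simp: reduced_def)
  obtain a' where a': "set a' \<subseteq> D4_S" "length a' = len (wprod a)" "wprod a' = wprod a"
    using exists_reduced_word wprod_in_parabolic[OF S(1)] by (metis coxW_eq_parabolic)
  have "length (a @ b) = len (wprod (a' @ b))"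
    using assms a'(3) by (simp add: reduced_def wprod_append)
  also have "\<dots> \<le> length (a' @ b)"
    using a'(1) S(2) by (intro len_le_length) auto
  finally have "length a \<le> len (wprod a)" using a'(2) by simp
  then show ?thesis using len_le_length[OF S(1)] S(1) by (simp add: reduced_def)
qed

section \<open>The coset \<open>W\<^sub>1\<^sub>3\<^sub>4 w\<^sub>0\<close>\<close>

lemma w0_apply: "w0 x = (if \<bar>x\<bar> \<in> {1..4} then - x else x)"
proof -
  have "[-1, -2, -3, -4] ! nat (\<bar>x\<bar> - 1) = - \<bar>x\<bar>" if "\<bar>x\<bar> \<in> {1..4}"
  proof -
    have "\<bar>x\<bar> \<in> {1, 2, 3, 4}" using that by auto
    then show ?thesis by auto
  qed
  then show ?thesis by (simp add: w0_def signed_perm_def sgn_mult_abs)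
qed

lemma w0_comp_w0: "w0 \<circ> w0 = id"
  by (auto simp: fun_eq_iff w0_apply)

lemma abs_swp: "x \<noteq> 0 \<Longrightarrow> \<bar>swp a b x\<bar> = (if \<bar>x\<bar> = a then \<bar>b\<bar> else if \<bar>x\<bar> = b then \<bar>a\<bar> else \<bar>x\<bar>)"
  by (simp add: swp_def abs_mult)

lemma abs_nswp: "x \<noteq> 0 \<Longrightarrow> \<bar>nswp a b x\<bar> = (if \<bar>x\<bar> = a then \<bar>b\<bar> else if \<bar>x\<bar> = b then \<bar>a\<bar> else \<bar>x\<bar>)"
  by (simp add: nswp_def abs_mult)

lemma gen_range: "\<bar>x\<bar> \<in> {1..4} \<Longrightarrow> \<bar>gen s x\<bar> \<in> {1..4}"
  by (auto simp: gen_def abs_swp abs_nswp)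

lemma gen_comp_w0: "gen s \<circ> w0 = w0 \<circ> gen s"
proof
  fix x
  show "(gen s \<circ> w0) x = (w0 \<circ> gen s) x"
  proof (cases "\<bar>x\<bar> \<in> {1..4}")
    case True
    then show ?thesis using gen_range[OF True] by (simp add: w0_apply gen_odd del: atLeastAtMost_iff)
  next
    case False
    then show ?thesis by (simp add: w0_apply gen_outside del: atLeastAtMost_iff)
  qed
qed

lemma gen_comp_w0_involution: "(gen s \<circ> w0) \<circ> (gen s \<circ> w0) = id"
proof -
  have "gen s (w0 x) = w0 (gen s x)" for x using gen_comp_w0 by (metis comp_apply)
  moreover have "w0 (w0 x) = x" for x using w0_comp_w0 by (metis comp_apply id_apply)
  ultimately show ?thesis by (simp add: fun_eq_iff)
qed

definition w0_coset :: "int list list" where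
  "w0_coset = map (\<lambda>us. window (wprod us \<circ> w0)) (subseqs [1, 3, 4])"

lemma w0_coset_certificate:
  "[-1, -2, -3, -4] \<in> set w0_coset \<and> (\<forall>z \<in> set w0_coset. D4_window z \<and> map (signed_perm z) z = [1, 2, 3, 4]
     \<and> (\<forall>s \<in> {1, 3, 4}. map (gen s) z \<in> set w0_coset))"
  by code_simp

lemma w0_coset_D4_windows: "z \<in> set w0_coset \<Longrightarrow> z \<in> set D4_windows"
  using w0_coset_certificate D4_window_in_D4_windows by blast

lemma w0_coset_involution: "z \<in> set w0_coset \<Longrightarrow> signed_perm z \<circ> signed_perm z = id"
  using w0_coset_certificate signed_perm_comp[of z z] signed_perm_identity
  by (simp add: length_D4_windows_elem w0_coset_D4_windows)

lemma w0_coset_gen: "z \<in> set w0_coset \<Longrightarrow> s \<in> {1, 3, 4} \<Longrightarrow> map (gen s) z \<in> set w0_coset"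
  using w0_coset_certificate by blast

lemma parabolic_134_comp_w0:
  assumes "u \<in> parabolic {1, 3, 4}"
  shows "\<exists>z \<in> set w0_coset. u \<circ> w0 = signed_perm z"
proof -
  have "set us \<subseteq> {1, 3, 4} \<Longrightarrow> \<exists>z \<in> set w0_coset. wprod us \<circ> w0 = signed_perm z" for us
  proof (induction us)
    case Nil
    then show ?case using w0_coset_certificate by (auto simp: w0_def)
  next
    case (Cons s us)
    have "set us \<subseteq> {1, 3, 4}" using Cons.prems by simp
    then obtain z where z: "z \<in> set w0_coset" "wprod us \<circ> w0 = signed_perm z"
      using Cons.IH by blast
    have "wprod (s # us) \<circ> w0 = gen s \<circ> signed_perm z"
      using z(2) by (simp only: wprod_Cons comp_assoc)
    also have "\<dots> = signed_perm (map (gen s) z)"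
      using length_D4_windows_elem[OF w0_coset_D4_windows[OF z(1)]] by simp
    finally have "wprod (s # us) \<circ> w0 = signed_perm (map (gen s) z)" .
    moreover have "map (gen s) z \<in> set w0_coset" using w0_coset_gen[OF z(1)] Cons.prems by simp
    ultimately show ?case by blast
  qed
  then show ?thesis using assms by (auto simp: parabolic_def)
qed

definition rot134 :: "nat \<Rightarrow> nat" where
  "rot134 x = (if x = 1 then 3 else if x = 3 then 4 else if x = 4 then 1 else x)"

text \<open>Certificate for the ascent of displacements, \<open>\<rho>\<close> being the action of the triality on \<open>{1, 3, 4}\<close>.
  If \<open>\<delta> X (\<theta> X)\<close> has window \<open>z\<close>, an \<open>r\<close>-neighbour of \<open>X\<close> at the same distance from \<open>\<theta> X\<close>
  (it exists by thickness when \<open>r\<close> shortens \<open>z\<close>) has displacement \<open>s\<^bsub>\<rho> r\<^esub> z\<close>, and a \<open>t\<close>-neighbour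
  farther from \<open>\<theta> X\<close> has displacement \<open>s\<^bsub>\<rho> t\<^esub> s\<^sub>t z\<close>, provided these are longer than their
  predecessors.\<close>
definition coset_ascent :: "(nat \<Rightarrow> nat) \<Rightarrow> int list \<Rightarrow> bool" where
  "coset_ascent \<rho> z \<longleftrightarrow> z = [-1, -2, -3, -4]
     \<or> (\<exists>r \<in> {1, 3, 4}. window_length (map (gen r) z) + 1 = window_length z
          \<and> window_length (map (gen (\<rho> r)) z) = window_length z + 1)
     \<or> (\<exists>t \<in> {1, 3, 4}. window_length (map (gen t) z) = window_length z + 1
          \<and> window_length (map (gen (\<rho> t)) (map (gen t) z)) = window_length z + 2)"

lemma coset_ascent_certificate:
  "(\<forall>z \<in> set w0_coset. coset_ascent rot134 z) \<and> (\<forall>z \<in> set w0_coset. coset_ascent (rot134 \<circ> rot134) z)"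
  by code_simp

section \<open>Buildings of type D4\<close>

locale D4_W_metric =
  fixes \<delta> :: "'c \<Rightarrow> 'c \<Rightarrow> int \<Rightarrow> int"
  assumes building: "D4_building \<delta>"
begin

lemma wdist_in_coxW: "\<delta> C D \<in> coxW"
  using building by (simp add: D4_building_def)

lemma wdist_eq_id_iff: "\<delta> C D = id \<longleftrightarrow> C = D"
  using building by (simp add: D4_building_def)

lemma wdist_self [simp]: "\<delta> C C = id"
  by (simp add: wdist_eq_id_iff)

lemma wdist_adjacent:
  "s \<in> D4_S \<Longrightarrow> \<delta> C' C = gen s \<Longrightarrow> \<delta> C' D = gen s \<circ> \<delta> C D \<or> \<delta> C' D = \<delta> C D"
  using building unfolding D4_building_def by blast

lemma wdist_adjacent_ascent:
  "s \<in> D4_S \<Longrightarrow> \<delta> C' C = gen s \<Longrightarrow> len (gen s \<circ> \<delta> C D) = len (\<delta> C D) + 1 \<Longrightarrow>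
    \<delta> C' D = gen s \<circ> \<delta> C D"
  using building unfolding D4_building_def by blast

lemma exists_adjacent: "s \<in> D4_S \<Longrightarrow> \<exists>C'. \<delta> C' C = gen s \<and> \<delta> C' D = gen s \<circ> \<delta> C D"
  using building unfolding D4_building_def by blast

lemma wdist_gen_sym:
  assumes s: "s \<in> D4_S" and XY: "\<delta> X Y = gen s"
  shows "\<delta> Y X = gen s"
proof -
  have "Y \<noteq> X" using XY gen_neq_id[OF s] by auto
  then have "\<delta> Y X \<noteq> id" by (simp add: wdist_eq_id_iff)
  then have "id = gen s \<circ> \<delta> Y X"
    using wdist_adjacent[OF s XY, of X] by auto
  then show ?thesis by (metis gen_cancel comp_id)
qed

text \<open>\<open>Z\<close> walks from \<open>X\<close> to \<open>Y\<close> along \<open>us\<close>; since the reversed walked prefix stays reduced, each step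
  lengthens \<open>\<delta> Z X\<close> by the axiom of W-metric spaces.\<close>
lemma wdist_along_reduced_word:
  "reduced (ps @ us) \<Longrightarrow> \<delta> Z X = wprod (rev ps) \<Longrightarrow> \<delta> Z Y = wprod us \<Longrightarrow>
    \<delta> Y X = wprod (rev (ps @ us))"
proof (induction us arbitrary: Z ps)
  case Nil
  from Nil.prems(3) have "\<delta> Z Y = id" by (simp only: wprod_Nil)
  then have "Z = Y" by (simp only: wdist_eq_id_iff)
  then show ?case using Nil by simp
next
  case (Cons s us)
  have s: "s \<in> D4_S" using Cons.prems(1) by (auto simp: reduced_def)
  obtain Z' where Z': "\<delta> Z' Z = gen s" "\<delta> Z' Y = gen s \<circ> \<delta> Z Y"
    using exists_adjacent[OF s] by blast
  have reduced_ps_s: "reduced (ps @ [s])"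
    using reduced_appendD[of "ps @ [s]" us] Cons.prems(1) by simp
  then have "reduced ps" using reduced_appendD by blast
  then have "len (gen s \<circ> \<delta> Z X) = len (\<delta> Z X) + 1"
    using reduced_rev[OF reduced_ps_s] reduced_rev Cons.prems(2) by (simp add: reduced_def)
  then have "\<delta> Z' X = wprod (rev (ps @ [s]))"
    using wdist_adjacent_ascent[OF s Z'(1)] Cons.prems(2) by simp
  moreover have "\<delta> Z' Y = wprod us"
    by (simp only: Z'(2) Cons.prems(3) wprod_Cons gen_cancel)
  ultimately show ?case using Cons.IH[of "ps @ [s]" Z'] Cons.prems(1) by simp
qed

lemma wdist_swap: "\<delta> Y X = inv (\<delta> X Y)"
proof -
  obtain us where "set us \<subseteq> D4_S" "length us = len (\<delta> X Y)" "wprod us = \<delta> X Y"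
    using exists_reduced_word[OF wdist_in_coxW] by blast
  then have "reduced ([] @ us)" and us: "wprod us = \<delta> X Y" by (simp_all add: reduced_def)
  then have "\<delta> Y X = wprod (rev us)"
    using wdist_along_reduced_word[of "[]" us X X Y] by simp
  then show ?thesis using us inv_wprod by metis
qed

lemma wdist_swap_involution: "w \<circ> w = id \<Longrightarrow> \<delta> X Y = w \<Longrightarrow> \<delta> Y X = w"
  using wdist_swap inv_unique_comp by metis

lemma wdist_gallery:
  assumes "T \<subseteq> D4_S" and "\<delta> P Y \<in> parabolic T"
  shows "\<exists>u \<in> parabolic T. \<delta> Y X = u \<circ> \<delta> P X"
proof -
  have "set us \<subseteq> T \<Longrightarrow> \<delta> P Y = wprod us \<Longrightarrow> \<exists>u \<in> parabolic T. \<delta> Y X = u \<circ> \<delta> P X" for us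
  proof (induction us arbitrary: P)
    case Nil
    from Nil.prems(2) have "\<delta> P Y = id" by (simp only: wprod_Nil)
    then have "P = Y" by (simp only: wdist_eq_id_iff)
    moreover have "id \<in> parabolic T" using wprod_in_parabolic[of "[]" T] by simp
    ultimately show ?case by (intro bexI[of _ id]) simp_all
  next
    case (Cons s us)
    have s: "s \<in> D4_S" "s \<in> T" using Cons.prems assms(1) by auto
    obtain P' where P': "\<delta> P' P = gen s" "\<delta> P' Y = gen s \<circ> \<delta> P Y"
      using exists_adjacent[OF s(1)] by blast
    have "\<delta> P' Y = wprod us" by (simp only: P'(2) Cons.prems(2) wprod_Cons gen_cancel)
    moreover have "set us \<subseteq> T" using Cons.prems(1) by simp
    ultimately obtain u where u: "u \<in> parabolic T" "\<delta> Y X = u \<circ> \<delta> P' X"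
      using Cons.IH by blast
    from wdist_adjacent[OF s(1) P'(1), of X] show ?case
    proof
      assume "\<delta> P' X = gen s \<circ> \<delta> P X"
      then show ?thesis using u parabolic_comp[OF u(1) gen_in_parabolic[OF s(2)]]
        by (metis comp_assoc)
    next
      assume "\<delta> P' X = \<delta> P X"
      then show ?thesis using u by auto
    qed
  qed
  then show ?thesis using assms(2) by (auto simp: parabolic_def)
qed

lemma exists_chamber_at_wdist: "w \<in> coxW \<Longrightarrow> \<exists>X. \<delta> X C = w"
proof -
  have "\<exists>X. \<delta> X C = wprod ws" if "set ws \<subseteq> D4_S" for ws
    using that
  proof (induction ws)
    case (Cons s ws)
    then obtain X where "\<delta> X C = wprod ws" by auto
    moreover obtain Y where "\<delta> Y X = gen s" "\<delta> Y C = gen s \<circ> \<delta> X C"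
      using exists_adjacent[of s X C] Cons.prems by auto
    ultimately show ?case by (metis wprod_Cons)
  qed (auto intro: exI[of _ C])
  then show "w \<in> coxW \<Longrightarrow> \<exists>X. \<delta> X C = w" by (auto simp: coxW_def)
qed

lemma chamber_opp_iff: "chamber_opp \<delta> X Y \<longleftrightarrow> \<delta> X Y = w0"
  using len_eq_12_iff[OF wdist_in_coxW] by (simp add: chamber_opp_def Max_len_coxW)

lemma residue_eq: "residue \<delta> K C = {X. \<delta> C X \<in> parabolic K}"
  by (auto simp: residue_def parabolic_def)

text \<open>Of the at least three chambers of the \<open>r\<close>-panel of \<open>X\<close>, at most one is closer to \<open>Y\<close>.\<close>
lemma thick_exists_adjacent_same_wdist:
  assumes thick: "thick \<delta>" and r: "r \<in> D4_S" and shorter: "len (gen r \<circ> \<delta> X Y) + 1 = len (\<delta> X Y)"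
  shows "\<exists>X'. \<delta> X' X = gen r \<and> \<delta> X' Y = \<delta> X Y"
proof (rule ccontr)
  assume none: "\<not> ?thesis"
  obtain D1 D2 where D: "D1 \<noteq> D2" "\<delta> X D1 = gen r" "\<delta> X D2 = gen r"
    using thick r unfolding thick_def by blast
  have D': "\<delta> D1 X = gen r" "\<delta> D2 X = gen r" using D wdist_gen_sym[OF r] by auto
  have closer: "\<delta> D1 Y = gen r \<circ> \<delta> X Y" "\<delta> D2 Y = gen r \<circ> \<delta> X Y"
    using wdist_adjacent[OF r D'(1), of Y] wdist_adjacent[OF r D'(2), of Y] none D' by auto
  have "\<delta> D2 D1 \<noteq> id" using D(1) by (simp add: wdist_eq_id_iff)
  then have "\<delta> D2 D1 = gen r"
    using wdist_adjacent[OF r D'(2), of D1] D(2) by (auto simp: gen_cancel)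
  moreover have "len (gen r \<circ> \<delta> D1 Y) = len (\<delta> D1 Y) + 1"
    using closer(1) shorter by (simp add: gen_cancel)
  ultimately have "\<delta> D2 Y = \<delta> X Y"
    using wdist_adjacent_ascent[OF r] closer(1) by (simp add: gen_cancel)
  then show False using closer(2) shorter by simp
qed

end

section \<open>Trialities\<close>

locale D4_triality = D4_W_metric \<delta> for \<delta> :: "'c \<Rightarrow> 'c \<Rightarrow> int \<Rightarrow> int" +
  fixes \<theta> :: "'c \<Rightarrow> 'c" and \<sigma> :: "nat \<Rightarrow> nat"
  assumes triality: "triality \<delta> \<theta> \<sigma>"
begin

lemma building_aut: "building_aut \<delta> \<theta> \<sigma>"
  using triality by (simp add: triality_def)

lemma bij_betw_sigma: "bij_betw \<sigma> D4_S D4_S"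
  using building_aut by (simp add: building_aut_def)

lemma sigma_D4_S: "s \<in> D4_S \<Longrightarrow> \<sigma> s \<in> D4_S"
  using bij_betw_sigma by (rule bij_betw_apply)

lemma triality_rotation: "\<exists>\<rho> \<in> {rot134, rot134 \<circ> rot134}. \<forall>x \<in> {1, 3, 4}. \<sigma> x = \<rho> x"
  using triality by (auto simp: triality_def rot134_def)

lemma sigma_134: "x \<in> {1, 3, 4} \<Longrightarrow> \<sigma> x \<in> {1, 3, 4}"
  using triality_rotation by (auto simp: rot134_def)

lemma sigma_image_eq:
  assumes "K \<subseteq> D4_S" and "K \<subseteq> \<sigma> ` K"
  shows "\<sigma> ` K = K"
proof -
  have "finite K" using assms(1) finite_subset by (auto simp: D4_S_def)
  moreover have "card (\<sigma> ` K) = card K"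
    using assms(1) bij_betw_sigma by (intro card_image) (auto simp: bij_betw_def inj_on_subset)
  ultimately show ?thesis using assms(2) by (intro card_subset_eq[symmetric]) auto
qed

lemma sigma_invariant_subset:
  assumes "\<sigma> ` K = K"
  shows "K \<inter> {1, 3, 4} = {} \<or> {1, 3, 4} \<subseteq> K"
proof (cases "K \<inter> {1, 3, 4} = {}")
  case False
  then obtain x where x: "x \<in> K" "x \<in> {1, 3, 4}" by blast
  then have "\<sigma> x \<in> K" "\<sigma> (\<sigma> x) \<in> K" using assms by blast+
  then have "{x, \<sigma> x, \<sigma> (\<sigma> x)} \<subseteq> K" using x(1) by simp
  moreover have "{x, \<sigma> x, \<sigma> (\<sigma> x)} = {1, 3, 4}"
    using triality x(2) by (auto simp: triality_def)
  ultimately show ?thesis by simp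
qed simp

lemma wdist_image_wprod:
  "set ws \<subseteq> D4_S \<Longrightarrow> \<delta> C D = wprod ws \<Longrightarrow> \<delta> (\<theta> C) (\<theta> D) = wprod (map \<sigma> ws)"
  using building_aut by (auto simp: building_aut_def)

lemma wdist_image_gen: "s \<in> D4_S \<Longrightarrow> \<delta> C D = gen s \<Longrightarrow> \<delta> (\<theta> C) (\<theta> D) = gen (\<sigma> s)"
  using wdist_image_wprod[of "[s]" C D] by simp

lemma wdist_image_parabolic:
  assumes "T \<subseteq> D4_S" and "\<delta> C D \<in> parabolic T"
  shows "\<delta> (\<theta> C) (\<theta> D) \<in> parabolic (\<sigma> ` T)"
proof -
  obtain ws where ws: "set ws \<subseteq> T" "\<delta> C D = wprod ws" using assms(2) by (auto simp: parabolic_def)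
  then have "\<delta> (\<theta> C) (\<theta> D) = wprod (map \<sigma> ws)" using wdist_image_wprod assms(1) by blast
  then show ?thesis using ws(1) wprod_in_parabolic[of "map \<sigma> ws" "\<sigma> ` T"] by auto
qed

lemma displacement_step:
  assumes t: "t \<in> D4_S" and adj: "\<delta> X' X = gen t" and w: "\<delta> X' (\<theta> X) = w" "w \<circ> w = id"
    and longer: "len (gen (\<sigma> t) \<circ> w) = len w + 1"
    and involution: "(gen (\<sigma> t) \<circ> w) \<circ> (gen (\<sigma> t) \<circ> w) = id"
  shows "\<delta> X' (\<theta> X') = gen (\<sigma> t) \<circ> w"
proof -
  have "\<delta> (\<theta> X') (\<theta> X) = gen (\<sigma> t)" using wdist_image_gen[OF t adj] .
  moreover have "\<delta> (\<theta> X) X' = w" using wdist_swap_involution w(2,1) .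
  ultimately have "\<delta> (\<theta> X') X' = gen (\<sigma> t) \<circ> w"
    using wdist_adjacent_ascent[OF sigma_D4_S[OF t]] longer by simp
  then show ?thesis using wdist_swap_involution involution by blast
qed

lemma coset_displacement_step:
  assumes z: "z \<in> set w0_coset" and t: "t \<in> {1, 3, 4}"
    and adj: "\<delta> X' X = gen t" and displ: "\<delta> X' (\<theta> X) = signed_perm z"
    and longer: "window_length (map (gen (\<sigma> t)) z) = window_length z + 1"
  shows "\<delta> X' (\<theta> X') = signed_perm (map (gen (\<sigma> t)) z)"
proof -
  have z': "map (gen (\<sigma> t)) z \<in> set w0_coset" using w0_coset_gen[OF z sigma_134[OF t]] .
  have comp: "gen (\<sigma> t) \<circ> signed_perm z = signed_perm (map (gen (\<sigma> t)) z)"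
    using length_D4_windows_elem[OF w0_coset_D4_windows[OF z]] by simp
  have "t \<in> D4_S" using t by (auto simp: D4_S_def)
  moreover have "len (gen (\<sigma> t) \<circ> signed_perm z) = len (signed_perm z) + 1"
    using longer z z' by (simp add: comp len_signed_perm w0_coset_D4_windows)
  ultimately show ?thesis
    using displacement_step[OF _ adj displ] w0_coset_involution z z' by (simp add: comp)
qed

lemma coset_displacement_ascends:
  assumes thick: "thick \<delta>" and z: "z \<in> set w0_coset" and not_w0: "z \<noteq> [-1, -2, -3, -4]"
    and displ: "\<delta> X (\<theta> X) = signed_perm z"
  shows "\<exists>X' z'. z' \<in> set w0_coset \<and> window_length z < window_length z' \<and> \<delta> X' (\<theta> X') = signed_perm z'"
proof -
  obtain \<rho> where \<rho>_cases: "\<rho> \<in> {rot134, rot134 \<circ> rot134}"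
    and \<rho>: "\<And>x. x \<in> {1, 3, 4} \<Longrightarrow> \<sigma> x = \<rho> x"
    using triality_rotation by blast
  have "coset_ascent \<rho> z"
    using \<rho>_cases coset_ascent_certificate z by auto
  then consider r where "r \<in> {1, 3, 4}" "window_length (map (gen r) z) + 1 = window_length z"
      "window_length (map (gen (\<sigma> r)) z) = window_length z + 1"
    | t where "t \<in> {1, 3, 4}" "window_length (map (gen t) z) = window_length z + 1"
      "window_length (map (gen (\<sigma> t)) (map (gen t) z)) = window_length z + 2"
    using \<rho> not_w0 unfolding coset_ascent_def by fastforce
  then show ?thesis
  proof cases
    case (1 r)
    have r: "r \<in> D4_S" using 1(1) by (auto simp: D4_S_def)
    have shorter: "len (gen r \<circ> \<delta> X (\<theta> X)) + 1 = len (\<delta> X (\<theta> X))"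
      using 1 z displ w0_coset_gen[OF z] length_D4_windows_elem[OF w0_coset_D4_windows[OF z]]
      by (simp add: len_signed_perm w0_coset_D4_windows)
    obtain X' where "\<delta> X' X = gen r" "\<delta> X' (\<theta> X) = signed_perm z"
      using thick_exists_adjacent_same_wdist[OF thick r shorter] displ by auto
    then have "\<delta> X' (\<theta> X') = signed_perm (map (gen (\<sigma> r)) z)"
      using coset_displacement_step 1 z by blast
    moreover have "window_length z < window_length (map (gen (\<sigma> r)) z)" using 1(3) by simp
    ultimately show ?thesis using w0_coset_gen[OF z sigma_134[OF 1(1)]] by blast
  next
    case (2 t)
    have t: "t \<in> D4_S" using 2(1) by (auto simp: D4_S_def)
    let ?z = "map (gen t) z"
    have z1: "?z \<in> set w0_coset" using w0_coset_gen[OF z 2(1)] .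
    obtain X' where "\<delta> X' X = gen t" "\<delta> X' (\<theta> X) = signed_perm ?z"
      using exists_adjacent[OF t, of X "\<theta> X"] displ length_D4_windows_elem[OF w0_coset_D4_windows[OF z]]
      by auto
    then have "\<delta> X' (\<theta> X') = signed_perm (map (gen (\<sigma> t)) ?z)"
      using coset_displacement_step[OF z1 2(1)] 2 by simp
    moreover have "window_length z < window_length (map (gen (\<sigma> t)) ?z)" using 2(3) by simp
    ultimately show ?thesis using w0_coset_gen[OF z1 sigma_134[OF 2(1)]] by blast
  qed
qed

lemma coset_displacement_reaches_w0:
  assumes thick: "thick \<delta>" and "z \<in> set w0_coset" and "\<delta> X (\<theta> X) = signed_perm z"
  shows "\<exists>Y. \<delta> Y (\<theta> Y) = w0"
  using assms(2,3)
proof (induction "12 - window_length z" arbitrary: z X rule: less_induct)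
  case less
  show ?case
  proof (cases "z = [-1, -2, -3, -4]")
    case True
    then show ?thesis using less.prems(2) by (auto simp: w0_def)
  next
    case False
    then obtain X' z' where z': "z' \<in> set w0_coset" "window_length z < window_length z'"
      "\<delta> X' (\<theta> X') = signed_perm z'"
      using coset_displacement_ascends[OF thick less.prems(1) _ less.prems(2)] by blast
    moreover have "window_length z' \<le> 12"
      using D4_windows_length_le_12[OF w0_coset_D4_windows[OF z'(1)]] .
    ultimately show ?thesis using less.hyps[of z' X'] by simp
  qed
qed

end

section \<open>Simplices opposite their image\<close>

context D4_triality
begin

lemma chamber_in_residue: "C \<in> residue \<delta> K C"
  using wprod_in_parabolic[of "[]" K] by (simp add: residue_eq)

lemma wdist_from_image_of_residue:
  assumes "K \<subseteq> D4_S" and "D' \<in> \<theta> ` residue \<delta> K C"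
  shows "\<exists>u \<in> parabolic (\<sigma> ` K). \<delta> D' X = u \<circ> \<delta> (\<theta> C) X"
proof -
  obtain Z where "D' = \<theta> Z" "\<delta> C Z \<in> parabolic K" using assms(2) by (auto simp: residue_eq)
  then have "\<delta> (\<theta> C) D' \<in> parabolic (\<sigma> ` K)" using wdist_image_parabolic assms(1) by simp
  moreover have "\<sigma> ` K \<subseteq> D4_S" using assms(1) sigma_D4_S by auto
  ultimately show ?thesis using wdist_gallery by blast
qed

text \<open>For \<open>s \<in> K\<close>, chambers of \<open>\<theta> R\<close> opposite \<open>C\<close> and opposite an \<open>s\<close>-neighbour of \<open>C\<close> lie at
  distances from one chamber in a single coset of \<open>W\<^bsub>\<sigma> K\<^esub>\<close>; as \<open>w\<^sub>0\<close> is central this puts \<open>s\<close> into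
  \<open>W\<^bsub>\<sigma> K\<^esub>\<close>.\<close>
lemma opposite_image_cotype_invariant:
  assumes K: "K \<subseteq> D4_S"
    and opp: "\<And>X. X \<in> residue \<delta> K C \<Longrightarrow> \<exists>Y \<in> \<theta> ` residue \<delta> K C. \<delta> X Y = w0"
  shows "\<sigma> ` K = K"
proof (rule sigma_image_eq[OF K], rule subsetI, rule ccontr)
  fix s assume s: "s \<in> K" and s': "s \<notin> \<sigma> ` K"
  have sS: "s \<in> D4_S" using s K by auto
  obtain D where D: "D \<in> \<theta> ` residue \<delta> K C" "\<delta> C D = w0"
    using opp chamber_in_residue by blast
  obtain C' where C': "\<delta> C' C = gen s" "\<delta> C' D = gen s \<circ> w0"
    using exists_adjacent[OF sS, of C D] D(2) by auto
  have "C' \<in> residue \<delta> K C"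
    using wdist_gen_sym[OF sS C'(1)] gen_in_parabolic[OF s] by (simp add: residue_eq)
  then obtain D' where D': "D' \<in> \<theta> ` residue \<delta> K C" "\<delta> C' D' = w0" using opp by blast
  obtain u1 where u1: "u1 \<in> parabolic (\<sigma> ` K)" "\<delta> D C' = u1 \<circ> \<delta> (\<theta> C) C'"
    using wdist_from_image_of_residue[OF K D(1)] by blast
  obtain u2 where u2: "u2 \<in> parabolic (\<sigma> ` K)" "\<delta> D' C' = u2 \<circ> \<delta> (\<theta> C) C'"
    using wdist_from_image_of_residue[OF K D'(1)] by blast
  have "\<delta> D' C' = w0" using wdist_swap_involution[OF w0_comp_w0 D'(2)] .
  then have "\<delta> (\<theta> C) C' = inv u2 \<circ> w0" using parabolic_inv_comp_cancel[OF u2(1)] u2(2) by metis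
  moreover have "\<delta> D C' = gen s \<circ> w0" using wdist_swap_involution[OF gen_comp_w0_involution C'(2)] .
  ultimately have "gen s \<circ> w0 = (u1 \<circ> inv u2) \<circ> w0" using u1(2) by (simp add: comp_assoc)
  then have "gen s = u1 \<circ> inv u2" by (metis comp_assoc comp_id w0_comp_w0)
  moreover have "u1 \<circ> inv u2 \<in> parabolic (\<sigma> ` K)" using parabolic_comp parabolic_inv u1(1) u2(1) by blast
  ultimately show False using gen_notin_parabolic[OF sS s'] by simp
qed

lemma opposite_image_displacement_in_coset:
  assumes K: "K \<subseteq> {1, 3, 4}"
    and opp: "\<And>X. X \<in> residue \<delta> K C \<Longrightarrow> \<exists>Y \<in> \<theta> ` residue \<delta> K C. \<delta> X Y = w0"
  shows "\<exists>z \<in> set w0_coset. \<delta> C (\<theta> C) = signed_perm z"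
proof -
  have KS: "K \<subseteq> D4_S" using K by (auto simp: D4_S_def)
  obtain D where D: "D \<in> \<theta> ` residue \<delta> K C" "\<delta> C D = w0"
    using opp chamber_in_residue by blast
  obtain u where u: "u \<in> parabolic (\<sigma> ` K)" "\<delta> D C = u \<circ> \<delta> (\<theta> C) C"
    using wdist_from_image_of_residue[OF KS D(1)] by blast
  have "\<delta> D C = w0" using wdist_swap_involution[OF w0_comp_w0 D(2)] .
  then have "\<delta> (\<theta> C) C = inv u \<circ> w0" using parabolic_inv_comp_cancel[OF u(1)] u(2) by metis
  moreover have "inv u \<in> parabolic {1, 3, 4}"
    using parabolic_inv[OF u(1)] parabolic_mono[of "\<sigma> ` K" "{1, 3, 4}"] K sigma_134 by blast
  ultimately obtain z where "z \<in> set w0_coset" "\<delta> (\<theta> C) C = signed_perm z"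
    using parabolic_134_comp_w0 by metis
  then show ?thesis using wdist_swap_involution w0_coset_involution by blast
qed

lemma Opp_elim:
  assumes "a \<in> Opp \<delta> \<theta> \<sigma>"
  obtains J C where "J \<subseteq> D4_S" "a = (J, residue \<delta> (D4_S - J) C)"
    "\<And>X. X \<in> residue \<delta> (D4_S - J) C \<Longrightarrow> \<exists>Y \<in> \<theta> ` residue \<delta> (D4_S - J) C. \<delta> X Y = w0"
  using assms by (auto simp: Opp_def simplices_def simplex_opp_def simplex_image_def chamber_opp_iff)

lemma Opp_type_subset: "a \<in> Opp \<delta> \<theta> \<sigma> \<Longrightarrow> fst a \<subseteq> D4_S"
  by (erule Opp_elim) simp

lemma Opp_chamber:
  assumes "\<delta> X (\<theta> X) = w0"
  shows "(D4_S, {X}) \<in> Opp \<delta> \<theta> \<sigma>"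
proof -
  have "residue \<delta> (D4_S - D4_S) X = {X}"
    by (auto simp: residue_eq parabolic_empty wdist_eq_id_iff)
  then have "(D4_S, {X}) \<in> simplices \<delta>" unfolding simplices_def by force
  moreover have "simplex_opp \<delta> (D4_S, {X}) (simplex_image \<theta> \<sigma> (D4_S, {X}))"
    using assms by (simp add: simplex_opp_def simplex_image_def chamber_opp_iff)
  ultimately show ?thesis by (simp add: Opp_def)
qed

lemma Opp_empty_simplex: "({}, UNIV) \<in> Opp \<delta> \<theta> \<sigma>"
proof -
  have "residue \<delta> (D4_S - {}) C = UNIV" for C
    using wdist_in_coxW by (auto simp: residue_eq coxW_eq_parabolic)
  then have "({}, UNIV) \<in> simplices \<delta>" unfolding simplices_def by force
  moreover have "\<exists>D. \<delta> C (\<theta> D) = w0" for C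
  proof -
    obtain Y where "\<delta> Y C = w0" using exists_chamber_at_wdist[OF w0_in_coxW] by blast
    moreover have "surj \<theta>" using building_aut by (simp add: building_aut_def bij_def)
    ultimately show ?thesis using wdist_swap_involution[OF w0_comp_w0] by (metis surjD)
  qed
  moreover have "\<exists>C. \<delta> C (\<theta> D) = w0" for D
    using exists_chamber_at_wdist[OF w0_in_coxW] by blast
  ultimately show ?thesis
    by (simp add: Opp_def simplex_opp_def simplex_image_def chamber_opp_iff)
qed

lemma Opp_type_without_opposite_chamber:
  assumes thick: "thick \<delta>" and no_opp: "\<And>X. \<delta> X (\<theta> X) \<noteq> w0" and a: "a \<in> Opp \<delta> \<theta> \<sigma>"
  shows "fst a = {} \<or> fst a = {1, 3, 4}"
proof -
  obtain J C where J: "J \<subseteq> D4_S" "a = (J, residue \<delta> (D4_S - J) C)"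
    and opp: "\<And>X. X \<in> residue \<delta> (D4_S - J) C \<Longrightarrow> \<exists>Y \<in> \<theta> ` residue \<delta> (D4_S - J) C. \<delta> X Y = w0"
    using a by (elim Opp_elim) blast
  have invariant: "\<sigma> ` (D4_S - J) = D4_S - J"
    using opposite_image_cotype_invariant opp by blast
  have "2 \<in> D4_S - J"
  proof (rule ccontr)
    assume "2 \<notin> D4_S - J"
    then have "D4_S - J \<subseteq> {1, 3, 4}" by (auto simp: D4_S_def)
    then obtain z where "z \<in> set w0_coset" "\<delta> C (\<theta> C) = signed_perm z"
      using opposite_image_displacement_in_coset opp by blast
    then show False using coset_displacement_reaches_w0[OF thick] no_opp by blast
  qed
  then have "D4_S - J = {2} \<or> D4_S - J = D4_S"
    using sigma_invariant_subset[OF invariant] by (auto simp: D4_S_def)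
  moreover have "J = D4_S - (D4_S - J)" using J(1) by (simp add: double_diff)
  ultimately have "J = D4_S - {2} \<or> J = {}" by auto
  then show ?thesis using J(2) by (auto simp: D4_S_def)
qed

end

lemma Union_mem_of_subset_pair: "F \<subseteq> {A, B} \<Longrightarrow> A \<in> F \<Longrightarrow> A \<subseteq> B \<Longrightarrow> \<Union>F \<in> F"
proof -
  assume "F \<subseteq> {A, B}" "A \<in> F" "A \<subseteq> B"
  then have "F = {A} \<or> F = {A, B}" by auto
  then show "\<Union>F \<in> F" using \<open>A \<subseteq> B\<close> by (auto simp: Un_absorb1)
qed

theorem theorem3p17:
  fixes \<delta> :: "'c \<Rightarrow> 'c \<Rightarrow> int \<Rightarrow> int" and \<theta> :: "'c \<Rightarrow> 'c" and \<sigma> :: "nat \<Rightarrow> nat"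
  assumes "D4_building \<delta>" and "thick \<delta>" and "triality \<delta> \<theta> \<sigma>"
  shows "capped \<delta> \<theta> \<sigma>"
proof -
  interpret D4_triality \<delta> \<theta> \<sigma>
    by unfold_locales (fact assms(1), fact assms(3))
  show ?thesis
  proof (cases "\<exists>X. \<delta> X (\<theta> X) = w0")
    case True
    then obtain X where "\<delta> X (\<theta> X) = w0" by blast
    then have top: "(D4_S, {X}) \<in> Opp \<delta> \<theta> \<sigma>" by (rule Opp_chamber)
    then have "Type \<delta> \<theta> \<sigma> = D4_S" using Opp_type_subset by (force simp: Type_def)
    then show ?thesis using top by (force simp: capped_def)
  next
    case False
    then have "fst ` Opp \<delta> \<theta> \<sigma> \<subseteq> {{}, {1, 3, 4}}"
      using Opp_type_without_opposite_chamber[OF assms(2)] by blast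
    moreover have "{} \<in> fst ` Opp \<delta> \<theta> \<sigma>" using Opp_empty_simplex by force
    ultimately have "Type \<delta> \<theta> \<sigma> \<in> fst ` Opp \<delta> \<theta> \<sigma>"
      unfolding Type_def by (rule Union_mem_of_subset_pair) simp
    then show ?thesis by (force simp: capped_def)
  qed
qed

end
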